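(* Let $H=(V,F)$ be a finite hypergraph with directed edge set $\vec E$. Let $(r_i)_{i\in V}$ be positive integers and, for each $\alpha\in F$ and distinct $i,j\in\alpha$, let $u^\alpha_{i\to j}\in\mathbb{C}^{r_j\times r_i}$. Put $r_e=r_{t(e)}$ and $u_{e'\rightharpoonup e}=u^{s(e)}_{t(e')\to t(e)}$, and let $\mathcal M(\boldsymbol u)$ be the operator on $\bigoplus_{e\in\vec E}\mathbb{C}^{r_e}$ given by $(\mathcal M(\boldsymbol u)f)(e)=\sum_{e':e'\rightharpoonup e}u_{e'\rightharpoonup e}f(e')$. For $\alpha=\{i_1,\dots,i_{d_\alpha}\}\in F$ let $U_\alpha$ be the block matrix with blocks indexed by $\alpha\times\alpha$ whose $(i,i)$ block is $I_{r_i}$ and whose $(i,j)$ block ($i\ne j$) is $u^\alpha_{j\to i}$; assume each $U_\alpha$ is invertible and write $W_\alpha=U_\alpha^{-1}$, with $(i,j)$ block denoted $w^\alpha_{j\to i}\in\mathbb{C}^{r_i\times r_j}$ (including $i=j$). Define linear operators $\mathcal D,\mathcal W$ on $\bigoplus_{i\in V}\mathbb{C}^{r_i}$ by $$(\mathcal Dg)(i)=d_i\,g(i),\qquad (\mathcal Wg)(i)=\sum_{\substack{e,e'\in\vec E\\ t(e)=i,\ s(e)=s(e')}}w^{s(e)}_{t(e')\to i}\,g(t(e')).$$ Then, with $r_V=\sum_{i\in V}r_i$, $$\zeta_H(\boldsymbol u)^{-1}=\det(I-\mathcal M(\boldsymbol u))=\det\big(I_{r_V}-\mathcal D+\mathcal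 W\big)\prod_{\alpha\in F}\det U_\alpha .$$
   Context: A finite hypergraph $H=(V,F)$: $V$ finite, $F$ a finite set of nonempty subsets of $V$; $d_i=|\{\alpha\in F: i\in\alpha\}|$, $d_\alpha=|\alpha|$. Directed edges $\vec E=\{(\alpha\to i): i\in\alpha\in F\}$ with $s(\alpha\to i)=\alpha$, $t(\alpha\to i)=i$. Write $e'\rightharpoonup e$ if $t(e')\in s(e)$, $t(e')\ne t(e)$, $s(e')\ne s(e)$. Closed geodesics are sequences $(e_1,\dots,e_k)$ with $e_l\rightharpoonup e_{l+1}$ cyclically; prime cycles are cyclic-permutation classes of closed geodesics that are not $m$-fold repetitions ($m\ge2$) of shorter ones; $\pi(e_1,\dots,e_k)=u_{e_k\rightharpoonup e_1}\cdots u_{e_1\rightharpoonup e_2}$; the graph zeta function is $\zeta_H(\boldsymbol u)=\prod_{\mathfrak p}\det(I-\pi(\mathfrak p))^{-1}$, its reciprocal being understood as the formal power series $\det(I-\mathcal M(\boldsymbol u))$. *)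

theory Defs
  imports "HOL-Combinatorics.Permutations" Complex_Main
begin

text \<open>Block matrices on direct sums are represented
by index sets of pairs (block index, position inside the block).\<close>
definition det_on :: "'a set \<Rightarrow> ('a \<Rightarrow> 'a \<Rightarrow> complex) \<Rightarrow> complex" where
  "det_on S A = (\<Sum>p\<in>{p. p permutes S}. of_int (sign p) * (\<Prod>x\<in>S. A x (p x)))"

definition idm :: "'a \<Rightarrow> 'a \<Rightarrow> complex" where
  "idm x y = (if x = y then 1 else 0)"

text \<open>Directed edges (alpha \<rightarrow> i), encoded as pairs (alpha, i); s = fst, t = snd.\<close>
definition dedges :: "'v set set \<Rightarrow> ('v set \<times> 'v) set" where
  "dedges F = {(\<alpha>, i). \<alpha> \<in> F \<and> i \<in> \<alpha>}"

definition feeds :: "('v set \<times> 'v) \<Rightarrow> ('v set \<times> 'v) \<Rightarrow> bool" where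
  "feeds e' e \<longleftrightarrow> snd e' \<in> fst e \<and> snd e' \<noteq> snd e \<and> fst e' \<noteq> fst e"

definition hdeg :: "'v set set \<Rightarrow> 'v \<Rightarrow> nat" where
  "hdeg F i = card {\<alpha> \<in> F. i \<in> \<alpha>}"

text \<open>u \<alpha> i j is the r_j x r_i matrix u^alpha_{i->j}; entry (a,b) with a < r j, b < r i.\<close>

definition edge_idx :: "'v set set \<Rightarrow> ('v \<Rightarrow> nat) \<Rightarrow> (('v set \<times> 'v) \<times> nat) set" where
  "edge_idx F r = {(e, a). e \<in> dedges F \<and> a < r (snd e)}"

definition vert_idx :: "'v set \<Rightarrow> ('v \<Rightarrow> nat) \<Rightarrow> ('v \<times> nat) set" where
  "vert_idx A r = {(i, a). i \<in> A \<and> a < r i}"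

text \<open>The operator M(u): entry ((e,a),(e',b)) is the (a,b) entry of u_{e' \<rightharpoonup> e}
  = u^{s(e)}_{t(e') \<rightarrow> t(e)} if e' \<rightharpoonup> e, and 0 otherwise.\<close>
definition Mop :: "('v set \<Rightarrow> 'v \<Rightarrow> 'v \<Rightarrow> nat \<Rightarrow> nat \<Rightarrow> complex)
    \<Rightarrow> (('v set \<times> 'v) \<times> nat) \<Rightarrow> (('v set \<times> 'v) \<times> nat) \<Rightarrow> complex" where
  "Mop u x y = (case x of (e, a) \<Rightarrow> case y of (e', b) \<Rightarrow>
      if feeds e' e then u (fst e) (snd e') (snd e) a b else 0)"

definition zeta_inv :: "'v set set \<Rightarrow> ('v \<Rightarrow> nat)
    \<Rightarrow> ('v set \<Rightarrow> 'v \<Rightarrow> 'v \<Rightarrow> nat \<Rightarrow> nat \<Rightarrow> complex) \<Rightarrow> complex" where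
  "zeta_inv F r u = det_on (edge_idx F r) (\<lambda>x y. idm x y - Mop u x y)"

definition Umat :: "('v set \<Rightarrow> 'v \<Rightarrow> 'v \<Rightarrow> nat \<Rightarrow> nat \<Rightarrow> complex) \<Rightarrow> 'v set
    \<Rightarrow> ('v \<times> nat) \<Rightarrow> ('v \<times> nat) \<Rightarrow> complex" where
  "Umat u \<alpha> x y = (case x of (i, a) \<Rightarrow> case y of (j, b) \<Rightarrow>
      if i = j then (if a = b then 1 else 0) else u \<alpha> j i a b)"

definition is_inverse_on :: "'a set \<Rightarrow> ('a \<Rightarrow> 'a \<Rightarrow> complex) \<Rightarrow> ('a \<Rightarrow> 'a \<Rightarrow> complex) \<Rightarrow> bool" where
  "is_inverse_on S U W \<longleftrightarrow>
     (\<forall>x\<in>S. \<forall>y\<in>S. (\<Sum>z\<in>S. U x z * W z y) = idm x y \<and> (\<Sum>z\<in>S. W x z * U z y) = idm x y)"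

definition Dop :: "'v set set \<Rightarrow> ('v \<times> nat) \<Rightarrow> ('v \<times> nat) \<Rightarrow> complex" where
  "Dop F x y = (if x = y then of_nat (hdeg F (fst x)) else 0)"

text \<open>The operator W: entry ((i,a),(j,b)) = sum over e, e' in dedges with t(e) = i,
  s(e) = s(e'), t(e') = j of the (a,b) entry of w^{s(e)}_{t(e') -> i},
  i.e. of the ((i,a),(j,b)) entry of W_{s(e)}.\<close>
definition Wop :: "'v set set \<Rightarrow> ('v set \<Rightarrow> ('v \<times> nat) \<Rightarrow> ('v \<times> nat) \<Rightarrow> complex)
    \<Rightarrow> ('v \<times> nat) \<Rightarrow> ('v \<times> nat) \<Rightarrow> complex" where
  "Wop F w x y = (\<Sum>(e, e') \<in> {(e, e'). e \<in> dedges F \<and> e' \<in> dedges F \<and>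
        snd e = fst x \<and> fst e = fst e' \<and> snd e' = fst y}. w (fst e) x y)"

end

theory Submission
  imports Defs "Jordan_Normal_Form.Determinant"
begin

text \<open>Group the directed edges by their source hyperedge, so that
\<open>\<Oplus>\<^sub>e \<complex>\<^bsup>r\<^sub>e\<^esup> = \<Oplus>\<^sub>\<alpha> \<Oplus>\<^sub>i\<^sub>\<in>\<^sub>\<alpha> \<complex>\<^bsup>r\<^sub>i\<^esup>\<close>.
Then \<open>I - M(u) = U (I - A T)\<close>, where \<open>U = \<Oplus>\<^sub>\<alpha> U\<^sub>\<alpha>\<close> is block diagonal
(\<open>U_diag\<close>), \<open>T\<close> forgets the source hyperedge of a directed edge, and \<open>A\<close> maps the
vertex coordinates of \<open>\<alpha>\<close> into the \<open>\<alpha>\<close>-block through \<open>I - W\<^sub>\<alpha>\<close> (\<open>I_minus_W_lift\<close>).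
Indeed \<open>U\<^sub>\<alpha> (I - W\<^sub>\<alpha>) = U\<^sub>\<alpha> - I\<close>, so \<open>U A T\<close> carries the blocks \<open>u\<^sup>\<alpha>\<^sub>j\<^sub>\<rightarrow>\<^sub>i\<close>
of \<open>M(u)\<close> between all pairs of directed edges, and subtracting it from \<open>U\<close> cancels
them exactly where \<open>s(e') = s(e)\<close>.  Hence \<open>det (I - M(u)) = (\<Prod>\<^sub>\<alpha> det U\<^sub>\<alpha>) det (I - A T)\<close>,
and by Sylvester's determinant identity \<open>det (I - A T) = det (I - T A)\<close>, where
\<open>T A = D - W\<close> because vertex \<open>i\<close> lies in \<open>d\<^sub>i\<close> hyperedges.\<close>

section \<open>Determinants of matrices indexed by finite sets\<close>

lemma bij_betw_map_permutation:
  assumes "bij_betw f T S"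
  shows "bij_betw (map_permutation T f) {q. q permutes T} {p. p permutes S}"
proof (rule bij_betw_byWitness[where f' = "map_permutation S (inv_into T f)"])
  have inv: "bij_betw (inv_into T f) S T"
    using assms by (rule bij_betw_inv_into)
  show "\<forall>q\<in>{q. q permutes T}. map_permutation S (inv_into T f) (map_permutation T f q) = q"
    using assms by (auto intro!: map_permutation_compose_inv simp: bij_betw_inv_into_left)
  show "\<forall>p\<in>{p. p permutes S}. map_permutation T f (map_permutation S (inv_into T f) p) = p"
    using inv assms by (auto intro!: map_permutation_compose_inv simp: bij_betw_inv_into_right)
  show "map_permutation T f ` {q. q permutes T} \<subseteq> {p. p permutes S}"
    using assms by (auto intro: map_permutation_permutes)
  show "map_permutation S (inv_into T f) ` {p. p permutes S} \<subseteq> {q. q permutes T}"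
    using inv by (auto intro: map_permutation_permutes)
qed

lemma det_on_reindex:
  assumes f: "bij_betw f T S" and "finite T"
  shows "det_on S A = det_on T (\<lambda>x y. A (f x) (f y))"
proof -
  have inj: "inj_on f T" using f by (rule bij_betw_imp_inj_on)
  have "det_on S A = (\<Sum>q | q permutes T. of_int (sign (map_permutation T f q))
                        * (\<Prod>x\<in>S. A x (map_permutation T f q x)))"
    unfolding det_on_def by (rule sum.reindex_bij_betw[OF bij_betw_map_permutation[OF f], symmetric])
  also have "\<dots> = det_on T (\<lambda>x y. A (f x) (f y))"
    unfolding det_on_def
  proof (rule sum.cong[OF refl])
    fix q assume q: "q \<in> {q. q permutes T}"
    have "(\<Prod>x\<in>S. A x (map_permutation T f q x)) = (\<Prod>x\<in>T. A (f x) (map_permutation T f q (f x)))"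
      by (rule prod.reindex_bij_betw[OF f, symmetric])
    also have "\<dots> = (\<Prod>x\<in>T. A (f x) (f (q x)))"
      by (rule prod.cong) (simp_all add: map_permutation_apply[OF inj])
    finally show "of_int (sign (map_permutation T f q)) * (\<Prod>x\<in>S. A x (map_permutation T f q x))
        = of_int (sign q) * (\<Prod>x\<in>T. A (f x) (f (q x)))"
      using q assms by (simp add: sign_map_permutation[OF inj])
  qed
  finally show ?thesis .
qed

lemma det_on_cong:
  assumes "\<And>x y. x \<in> S \<Longrightarrow> y \<in> S \<Longrightarrow> A x y = B x y"
  shows "det_on S A = det_on S B"
  unfolding det_on_def by (auto intro!: sum.cong prod.cong simp: permutes_in_image assms)

lemma det_on_eq_det_mat:
  assumes f: "bij_betw f {0..<n} S"
  shows "det_on S A = det (mat n n (\<lambda>(i, j). A (f i) (f j)))"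
proof -
  have "det_on S A = det_on {0..<n} (\<lambda>i j. A (f i) (f j))"
    using f by (rule det_on_reindex) simp
  also have "\<dots> = det (mat n n (\<lambda>(i, j). A (f i) (f j)))"
    unfolding det_on_def det_def by (auto intro!: sum.cong prod.cong simp: permutes_in_image)
  finally show ?thesis .
qed

lemma det_on_mult:
  assumes "finite S"
  shows "det_on S (\<lambda>x y. \<Sum>z\<in>S. A x z * B z y) = det_on S A * det_on S B"
proof -
  obtain f where f: "bij_betw f {0..<card S} S"
    using ex_bij_betw_nat_finite[OF assms] by blast
  let ?mat = "\<lambda>A. mat (card S) (card S) (\<lambda>(i, j). A (f i) (f j))"
  have "?mat (\<lambda>x y. \<Sum>z\<in>S. A x z * B z y) = ?mat A * ?mat B"
  proof (rule eq_matI)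
    fix i j assume "i < dim_row (?mat A * ?mat B)" "j < dim_col (?mat A * ?mat B)"
    moreover have "(\<Sum>z\<in>S. A (f i) z * B z (f j)) = (\<Sum>k\<in>{0..<card S}. A (f i) (f k) * B (f k) (f j))"
      by (rule sum.reindex_bij_betw[OF f, symmetric])
    ultimately show "?mat (\<lambda>x y. \<Sum>z\<in>S. A x z * B z y) $$ (i, j) = (?mat A * ?mat B) $$ (i, j)"
      by (simp add: scalar_prod_def)
  qed auto
  then show ?thesis
    by (simp add: det_on_eq_det_mat[OF f] det_mult[of _ "card S"])
qed

lemma det_on_idm:
  assumes "finite S" and "\<And>x y. x \<in> S \<Longrightarrow> y \<in> S \<Longrightarrow> A x y = idm x y"
  shows "det_on S A = 1"
proof -
  obtain f where f: "bij_betw f {0..<card S} S"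
    using ex_bij_betw_nat_finite[OF assms(1)] by blast
  have "mat (card S) (card S) (\<lambda>(i, j). A (f i) (f j)) = 1\<^sub>m (card S)"
    using f by (intro eq_matI)
      (auto simp: assms(2) bij_betwE idm_def inj_on_eq_iff[OF bij_betw_imp_inj_on[OF f]])
  then show ?thesis
    by (simp add: det_on_eq_det_mat[OF f])
qed

lemma det_on_block_triangular:
  assumes "finite S1" and "finite S2" and "S1 \<inter> S2 = {}"
    and zero: "\<And>x y. x \<in> S1 \<Longrightarrow> y \<in> S2 \<Longrightarrow> A x y = 0"
  shows "det_on (S1 \<union> S2) A = det_on S1 A * det_on S2 A"
proof -
  define n1 n2 where "n1 = card S1" and "n2 = card S2"
  obtain f1 where f1: "bij_betw f1 {0..<n1} S1"
    using ex_bij_betw_nat_finite[OF assms(1)] n1_def by blast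
  obtain f2 where f2: "bij_betw f2 {0..<n2} S2"
    using ex_bij_betw_nat_finite[OF assms(2)] n2_def by blast
  define g where "g i = (if i < n1 then f1 i else f2 (i - n1))" for i
  have "bij_betw g {n1..<n1 + n2} S2"
  proof -
    have "bij_betw (\<lambda>i. i - n1) {n1..<n1 + n2} {0..<n2}"
      by (rule bij_betw_byWitness[where f' = "\<lambda>i. i + n1"]) auto
    then have "bij_betw (f2 \<circ> (\<lambda>i. i - n1)) {n1..<n1 + n2} S2"
      using f2 by (rule bij_betw_trans)
    then show ?thesis
      by (rule bij_betw_cong[THEN iffD1, rotated]) (auto simp: g_def)
  qed
  moreover have "bij_betw g {0..<n1} S1"
    using f1 by (rule bij_betw_cong[THEN iffD1, rotated]) (auto simp: g_def)
  ultimately have "bij_betw g ({0..<n1} \<union> {n1..<n1 + n2}) (S1 \<union> S2)"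
    using assms(3) by (intro bij_betw_combine)
  then have g: "bij_betw g {0..<n1 + n2} (S1 \<union> S2)"
    by (simp add: ivl_disj_un_two(3))
  have f1S: "f1 i \<in> S1" if "i < n1" for i
    using f1 that bij_betwE by fastforce
  have f2S: "f2 i \<in> S2" if "i < n2" for i
    using f2 that bij_betwE by fastforce
  let ?A1 = "mat n1 n1 (\<lambda>(i, j). A (f1 i) (f1 j))"
  let ?A3 = "mat n2 n1 (\<lambda>(i, j). A (f2 i) (f1 j))"
  let ?A4 = "mat n2 n2 (\<lambda>(i, j). A (f2 i) (f2 j))"
  have "det_on (S1 \<union> S2) A = det (mat (n1 + n2) (n1 + n2) (\<lambda>(i, j). A (g i) (g j)))"
    by (rule det_on_eq_det_mat[OF g])
  also have "mat (n1 + n2) (n1 + n2) (\<lambda>(i, j). A (g i) (g j)) = four_block_mat ?A1 (0\<^sub>m n1 n2) ?A3 ?A4"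
    by (rule eq_matI) (auto simp: g_def zero f1S f2S)
  also have "det \<dots> = det ?A1 * det ?A4"
    by (rule det_four_block_mat_upper_right_zero) auto
  finally show ?thesis
    by (simp add: det_on_eq_det_mat[OF f1] det_on_eq_det_mat[OF f2])
qed

lemma det_on_Plus_block_triangular:
  assumes "finite X" and "finite Y"
    and "(\<forall>x\<in>X. \<forall>y\<in>Y. A (Inl x) (Inr y) = 0) \<or> (\<forall>x\<in>X. \<forall>y\<in>Y. A (Inr y) (Inl x) = 0)"
  shows "det_on (Inl ` X \<union> Inr ` Y) A
    = det_on X (\<lambda>x x'. A (Inl x) (Inl x')) * det_on Y (\<lambda>y y'. A (Inr y) (Inr y'))"
proof -
  have "det_on (Inl ` X \<union> Inr ` Y) A = det_on (Inl ` X) A * det_on (Inr ` Y) A"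
    using assms(3)
  proof
    assume "\<forall>x\<in>X. \<forall>y\<in>Y. A (Inl x) (Inr y) = 0"
    then show ?thesis
      using assms(1,2) by (intro det_on_block_triangular) auto
  next
    assume "\<forall>x\<in>X. \<forall>y\<in>Y. A (Inr y) (Inl x) = 0"
    then have "det_on (Inr ` Y \<union> Inl ` X) A = det_on (Inr ` Y) A * det_on (Inl ` X) A"
      using assms(1,2) by (intro det_on_block_triangular) auto
    then show ?thesis
      by (simp add: Un_commute)
  qed
  moreover have "det_on (Inl ` X) A = det_on X (\<lambda>x x'. A (Inl x) (Inl x'))"
    using assms(1) by (intro det_on_reindex) (auto simp: bij_betw_def)
  moreover have "det_on (Inr ` Y) A = det_on Y (\<lambda>y y'. A (Inr y) (Inr y'))"
    using assms(2) by (intro det_on_reindex) (auto simp: bij_betw_def)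
  ultimately show ?thesis
    by simp
qed

lemma sum_idm_left: "finite X \<Longrightarrow> (\<Sum>x\<in>X. idm x0 x * f x) = (if x0 \<in> X then f x0 else 0)"
  by (simp add: idm_def if_distrib[of "\<lambda>c. c * _"] cong: if_cong)

lemma sum_idm_right: "finite X \<Longrightarrow> (\<Sum>x\<in>X. f x * idm x x0) = (if x0 \<in> X then f x0 else 0)"
  by (simp add: idm_def if_distrib[of "\<lambda>c. _ * c"] cong: if_cong)

lemma sum_Plus:
  assumes "finite X" "finite Y"
  shows "(\<Sum>z\<in>Inl ` X \<union> Inr ` Y. f z) = (\<Sum>x\<in>X. f (Inl x)) + (\<Sum>y\<in>Y. f (Inr y))"
  using assms by (subst sum.union_disjoint) (auto simp: sum.reindex)

lemma det_on_sylvester: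
  fixes A :: "'a \<Rightarrow> 'b \<Rightarrow> complex" and B :: "'b \<Rightarrow> 'a \<Rightarrow> complex"
  assumes X: "finite X" and Y: "finite Y"
  shows "det_on X (\<lambda>x x'. idm x x' - (\<Sum>y\<in>Y. A x y * B y x'))
       = det_on Y (\<lambda>y y'. idm y y' - (\<Sum>x\<in>X. B y x * A x y'))"
proof -
  let ?Z = "Inl ` X \<union> Inr ` Y"
  define N where "N z z' = (case (z, z') of
      (Inl x, Inl x') \<Rightarrow> idm x x' | (Inl x, Inr y) \<Rightarrow> A x y
    | (Inr y, Inl x) \<Rightarrow> B y x | (Inr y, Inr y') \<Rightarrow> idm y y')" for z z'
  define L where "L z z' = (case (z, z') of
      (Inl x, Inl x') \<Rightarrow> idm x x' | (Inl x, Inr y) \<Rightarrow> 0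
    | (Inr y, Inl x) \<Rightarrow> - B y x | (Inr y, Inr y') \<Rightarrow> idm y y')" for z z'
  note entries = N_def L_def sum_Plus[OF X Y] sum_idm_left sum_idm_right sum_negf X Y
  \<comment> \<open>\<open>N L\<close> and \<open>L N\<close> are block triangular with diagonal blocks \<open>(I - A B, I)\<close> and
      \<open>(I, I - B A)\<close>, and \<open>det L = 1\<close>.\<close>
  have "det_on ?Z L = 1"
    by (subst det_on_Plus_block_triangular) (simp_all add: det_on_idm entries)
  moreover have "det_on ?Z (\<lambda>z z'. \<Sum>w\<in>?Z. N z w * L w z')
      = det_on X (\<lambda>x x'. idm x x' - (\<Sum>y\<in>Y. A x y * B y x'))"
    by (subst det_on_Plus_block_triangular) (auto simp: det_on_idm entries intro!: det_on_cong)
  moreover have "det_on ?Z (\<lambda>z z'. \<Sum>w\<in>?Z. L z w * N w z')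
      = det_on Y (\<lambda>y y'. idm y y' - (\<Sum>x\<in>X. B y x * A x y'))"
    by (subst det_on_Plus_block_triangular) (auto simp: det_on_idm entries intro!: det_on_cong)
  ultimately show ?thesis
    using X Y by (simp add: det_on_mult)
qed

section \<open>Directed edges grouped by their source hyperedge\<close>

definition edge_coord :: "'v set \<Rightarrow> 'v \<times> nat \<Rightarrow> ('v set \<times> 'v) \<times> nat" where
  "edge_coord \<alpha> k = ((\<alpha>, fst k), snd k)"

definition src_idx :: "('v set \<times> 'v) \<times> nat \<Rightarrow> 'v set" where
  "src_idx x = fst (fst x)"

definition tgt_idx :: "('v set \<times> 'v) \<times> nat \<Rightarrow> 'v \<times> nat" where
  "tgt_idx x = (snd (fst x), snd x)"

lemma src_idx_edge_coord [simp]: "src_idx (edge_coord \<alpha> k) = \<alpha>"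
  and tgt_idx_edge_coord [simp]: "tgt_idx (edge_coord \<alpha> k) = k"
  and edge_coord_src_tgt [simp]: "edge_coord (src_idx x) (tgt_idx x) = x"
  by (simp_all add: edge_coord_def src_idx_def tgt_idx_def)

lemma vert_idx_eq_Sigma: "vert_idx A r = Sigma A (\<lambda>i. {..<r i})"
  by (auto simp: vert_idx_def)

lemma finite_vert_idx: "finite A \<Longrightarrow> finite (vert_idx A r)"
  by (simp add: vert_idx_eq_Sigma)

lemma edge_idx_iff:
  "x \<in> edge_idx F r \<longleftrightarrow> src_idx x \<in> F \<and> tgt_idx x \<in> vert_idx (src_idx x) r"
  by (cases x) (auto simp: edge_idx_def dedges_def vert_idx_def src_idx_def tgt_idx_def)

lemma edge_idx_eq_image:
  "edge_idx F r = (\<lambda>(\<alpha>, k). edge_coord \<alpha> k) ` Sigma F (\<lambda>\<alpha>. vert_idx \<alpha> r)"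
  by (force simp: edge_idx_iff image_iff)

lemma inj_on_edge_coord: "inj_on (\<lambda>(\<alpha>, k). edge_coord \<alpha> k) S"
  by (auto simp: inj_on_def edge_coord_def)

lemma finite_edge_idx:
  "finite F \<Longrightarrow> (\<And>\<alpha>. \<alpha> \<in> F \<Longrightarrow> finite \<alpha>) \<Longrightarrow> finite (edge_idx F r)"
  unfolding edge_idx_eq_image by (auto intro!: finite_imageI finite_SigmaI finite_vert_idx)

lemma sum_edge_idx:
  assumes "finite F" "\<And>\<alpha>. \<alpha> \<in> F \<Longrightarrow> finite \<alpha>"
  shows "(\<Sum>x\<in>edge_idx F r. f x) = (\<Sum>\<alpha>\<in>F. \<Sum>k\<in>vert_idx \<alpha> r. f (edge_coord \<alpha> k))"
  unfolding edge_idx_eq_image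
  by (subst sum.reindex[OF inj_on_edge_coord]) (simp add: sum.Sigma assms finite_vert_idx split_def)

lemma edge_idx_insert:
  "edge_idx (insert \<alpha> F) r = edge_coord \<alpha> ` vert_idx \<alpha> r \<union> edge_idx F r"
  by (auto simp: edge_idx_iff) (metis edge_coord_src_tgt image_eqI)

definition U_diag :: "('v set \<Rightarrow> 'v \<Rightarrow> 'v \<Rightarrow> nat \<Rightarrow> nat \<Rightarrow> complex)
    \<Rightarrow> ('v set \<times> 'v) \<times> nat \<Rightarrow> ('v set \<times> 'v) \<times> nat \<Rightarrow> complex" where
  "U_diag u x y = (if src_idx x = src_idx y then Umat u (src_idx x) (tgt_idx x) (tgt_idx y) else 0)"

definition I_minus_W_lift :: "('v set \<Rightarrow> 'v \<times> nat \<Rightarrow> 'v \<times> nat \<Rightarrow> complex)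
    \<Rightarrow> ('v set \<times> 'v) \<times> nat \<Rightarrow> 'v \<times> nat \<Rightarrow> complex" where
  "I_minus_W_lift w x g =
    (if fst g \<in> src_idx x then idm (tgt_idx x) g - w (src_idx x) (tgt_idx x) g else 0)"

lemma U_diag_mult_I_minus_W_lift:
  assumes "finite F" and "\<And>\<alpha>. \<alpha> \<in> F \<Longrightarrow> finite \<alpha>"
    and inv: "\<And>\<alpha>. \<alpha> \<in> F \<Longrightarrow> is_inverse_on (vert_idx \<alpha> r) (Umat u \<alpha>) (w \<alpha>)"
    and x: "x \<in> edge_idx F r" and g: "snd g < r (fst g)"
  shows "(\<Sum>z\<in>edge_idx F r. U_diag u x z * I_minus_W_lift w z g)
    = (if fst g \<in> src_idx x then Umat u (src_idx x) (tgt_idx x) g - idm (tgt_idx x) g else 0)"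
proof -
  define \<alpha> where "\<alpha> = src_idx x"
  have \<alpha>: "\<alpha> \<in> F" "tgt_idx x \<in> vert_idx \<alpha> r"
    using x by (simp_all add: edge_idx_iff \<alpha>_def)
  have fin: "finite (vert_idx \<alpha> r)"
    using \<alpha>(1) assms(2) by (simp add: finite_vert_idx)
  have "(\<Sum>z\<in>edge_idx F r. U_diag u x z * I_minus_W_lift w z g)
      = (\<Sum>\<beta>\<in>F. \<Sum>k\<in>vert_idx \<beta> r.
          U_diag u x (edge_coord \<beta> k) * I_minus_W_lift w (edge_coord \<beta> k) g)"
    using assms(1,2) by (rule sum_edge_idx)
  also have "\<dots> = (\<Sum>\<beta>\<in>F. if \<beta> = \<alpha>
      then \<Sum>k\<in>vert_idx \<alpha> r. Umat u \<alpha> (tgt_idx x) k * I_minus_W_lift w (edge_coord \<alpha> k) g else 0)"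
    by (rule sum.cong) (auto simp: U_diag_def \<alpha>_def)
  also have "\<dots> = (\<Sum>k\<in>vert_idx \<alpha> r. Umat u \<alpha> (tgt_idx x) k * I_minus_W_lift w (edge_coord \<alpha> k) g)"
    using \<alpha>(1) assms(1) by simp
  also have "\<dots> = (if fst g \<in> \<alpha> then Umat u \<alpha> (tgt_idx x) g - idm (tgt_idx x) g else 0)"
  proof (cases "fst g \<in> \<alpha>")
    case True
    then have "g \<in> vert_idx \<alpha> r"
      using g by (cases g) (simp add: vert_idx_def)
    then have "(\<Sum>k\<in>vert_idx \<alpha> r. Umat u \<alpha> (tgt_idx x) k * w \<alpha> k g) = idm (tgt_idx x) g"
      using inv[OF \<alpha>(1)] \<alpha>(2) by (simp add: is_inverse_on_def)
    with True \<open>g \<in> vert_idx \<alpha> r\<close> show ?thesis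
      by (simp add: I_minus_W_lift_def right_diff_distrib sum_subtractf sum_idm_right fin)
  qed (simp add: I_minus_W_lift_def)
  finally show ?thesis
    by (simp add: \<alpha>_def)
qed

lemma idm_minus_Mop_factorization:
  assumes "finite V" and "finite F" and sub: "\<And>\<alpha>. \<alpha> \<in> F \<Longrightarrow> \<alpha> \<subseteq> V"
    and inv: "\<And>\<alpha>. \<alpha> \<in> F \<Longrightarrow> is_inverse_on (vert_idx \<alpha> r) (Umat u \<alpha>) (w \<alpha>)"
    and x: "x \<in> edge_idx F r" and y: "y \<in> edge_idx F r"
  shows "idm x y - Mop u x y = (\<Sum>z\<in>edge_idx F r. U_diag u x z
           * (idm z y - (\<Sum>g\<in>vert_idx V r. I_minus_W_lift w z g * idm g (tgt_idx y))))"
proof -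
  have fin: "\<And>\<alpha>. \<alpha> \<in> F \<Longrightarrow> finite \<alpha>"
    using sub assms(1) finite_subset by blast
  obtain \<alpha> i a \<beta> j b where xy: "x = ((\<alpha>, i), a)" "y = ((\<beta>, j), b)"
    by (metis prod.collapse)
  have y': "j \<in> \<beta>" "\<beta> \<in> F" "b < r j"
    using y by (simp_all add: xy edge_idx_iff src_idx_def tgt_idx_def vert_idx_def)
  then have "tgt_idx y \<in> vert_idx V r"
    using sub by (auto simp: xy tgt_idx_def vert_idx_def)
  then have "(\<Sum>z\<in>edge_idx F r. U_diag u x z
           * (idm z y - (\<Sum>g\<in>vert_idx V r. I_minus_W_lift w z g * idm g (tgt_idx y))))
      = U_diag u x y - (\<Sum>z\<in>edge_idx F r. U_diag u x z * I_minus_W_lift w z (tgt_idx y))"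
    using y assms(1,2) fin
    by (simp add: sum_idm_right finite_vert_idx finite_edge_idx right_diff_distrib sum_subtractf)
  also have "\<dots> = U_diag u x y - (if j \<in> \<alpha> then Umat u \<alpha> (i, a) (j, b) - idm (i, a) (j, b) else 0)"
    using U_diag_mult_I_minus_W_lift[OF assms(2) fin inv x] y'(3)
    by (simp add: xy src_idx_def tgt_idx_def)
  also have "\<dots> = idm x y - Mop u x y"
    using y'(1) by (auto simp: xy U_diag_def Umat_def Mop_def feeds_def idm_def src_idx_def tgt_idx_def)
  finally show ?thesis ..
qed

lemma det_on_U_diag:
  assumes "finite F" and "\<And>\<alpha>. \<alpha> \<in> F \<Longrightarrow> finite \<alpha>"
  shows "det_on (edge_idx F r) (U_diag u) = (\<Prod>\<alpha>\<in>F. det_on (vert_idx \<alpha> r) (Umat u \<alpha>))"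
  using assms
proof (induction F rule: finite_induct)
  case empty
  then show ?case
    by (simp add: edge_idx_def dedges_def det_on_def)
next
  case (insert \<alpha> F)
  have fin: "finite \<alpha>" "\<And>\<beta>. \<beta> \<in> F \<Longrightarrow> finite \<beta>"
    using insert.prems by auto
  have "det_on (edge_idx (insert \<alpha> F) r) (U_diag u)
      = det_on (edge_coord \<alpha> ` vert_idx \<alpha> r) (U_diag u) * det_on (edge_idx F r) (U_diag u)"
    unfolding edge_idx_insert
    using insert.hyps fin
    by (intro det_on_block_triangular) (auto simp: finite_vert_idx finite_edge_idx edge_idx_iff U_diag_def)
  also have "det_on (edge_coord \<alpha> ` vert_idx \<alpha> r) (U_diag u) = det_on (vert_idx \<alpha> r) (Umat u \<alpha>)"
  proof -
    have "bij_betw (edge_coord \<alpha>) (vert_idx \<alpha> r) (edge_coord \<alpha> ` vert_idx \<alpha> r)"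
      by (auto simp: bij_betw_def inj_on_def edge_coord_def)
    with fin(1) show ?thesis
      by (simp add: det_on_reindex finite_vert_idx U_diag_def)
  qed
  finally show ?case
    using insert by simp
qed

lemma sum_tgt_mult_I_minus_W_lift:
  assumes "finite F" and "\<And>\<alpha>. \<alpha> \<in> F \<Longrightarrow> finite \<alpha>" and "snd g < r (fst g)"
  shows "(\<Sum>x\<in>edge_idx F r. idm g (tgt_idx x) * I_minus_W_lift w x h) = Dop F g h - Wop F w g h"
proof -
  obtain i a j b where gh: "g = (i, a)" "h = (j, b)"
    by force
  let ?F = "{\<alpha> \<in> F. i \<in> \<alpha> \<and> j \<in> \<alpha>}"
  have "(\<Sum>x\<in>edge_idx F r. idm g (tgt_idx x) * I_minus_W_lift w x h)
      = (\<Sum>\<alpha>\<in>F. \<Sum>k\<in>vert_idx \<alpha> r. idm g k * I_minus_W_lift w (edge_coord \<alpha> k) h)"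
    using assms(1,2) by (simp add: sum_edge_idx)
  also have "\<dots> = (\<Sum>\<alpha>\<in>F. if i \<in> \<alpha> \<and> j \<in> \<alpha> then idm g h - w \<alpha> g h else 0)"
  proof (rule sum.cong)
    fix \<alpha> assume "\<alpha> \<in> F"
    moreover have "g \<in> vert_idx \<alpha> r \<longleftrightarrow> i \<in> \<alpha>"
      using assms(3) by (simp add: gh vert_idx_def)
    ultimately show "(\<Sum>k\<in>vert_idx \<alpha> r. idm g k * I_minus_W_lift w (edge_coord \<alpha> k) h)
        = (if i \<in> \<alpha> \<and> j \<in> \<alpha> then idm g h - w \<alpha> g h else 0)"
      using assms(2) by (simp add: sum_idm_left finite_vert_idx I_minus_W_lift_def gh(2))
  qed simp
  also have "\<dots> = (\<Sum>\<alpha>\<in>?F. idm g h - w \<alpha> g h)"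
    using assms(1) by (simp add: sum.inter_filter)
  also have "\<dots> = (\<Sum>\<alpha>\<in>?F. idm g h) - (\<Sum>\<alpha>\<in>?F. w \<alpha> g h)"
    by (rule sum_subtractf)
  also have "(\<Sum>\<alpha>\<in>?F. idm g h) = Dop F g h"
    by (auto simp: Dop_def idm_def hdeg_def gh)
  also have "(\<Sum>\<alpha>\<in>?F. w \<alpha> g h) = Wop F w g h"
  proof -
    have "{(e, e'). e \<in> dedges F \<and> e' \<in> dedges F \<and> snd e = fst g \<and> fst e = fst e' \<and> snd e' = fst h}
        = (\<lambda>\<alpha>. ((\<alpha>, i), (\<alpha>, j))) ` ?F"
      by (auto simp: dedges_def gh image_iff)
    then show ?thesis
      unfolding Wop_def by (simp add: sum.reindex inj_on_def)
  qed
  finally show ?thesis .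
qed

theorem theorem3:
  fixes V :: "'v set" and F :: "'v set set" and r :: "'v \<Rightarrow> nat"
    and u :: "'v set \<Rightarrow> 'v \<Rightarrow> 'v \<Rightarrow> nat \<Rightarrow> nat \<Rightarrow> complex"
    and w :: "'v set \<Rightarrow> ('v \<times> nat) \<Rightarrow> ('v \<times> nat) \<Rightarrow> complex"
  assumes "finite V" and "finite F"
    and "\<And>\<alpha>. \<alpha> \<in> F \<Longrightarrow> \<alpha> \<noteq> {} \<and> \<alpha> \<subseteq> V"
    and "\<And>i. i \<in> V \<Longrightarrow> r i > 0"
    and "\<And>\<alpha>. \<alpha> \<in> F \<Longrightarrow> is_inverse_on (vert_idx \<alpha> r) (Umat u \<alpha>) (w \<alpha>)"
  shows "zeta_inv F r u = det_on (edge_idx F r) (\<lambda>x y. idm x y - Mop u x y)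
    \<and> det_on (edge_idx F r) (\<lambda>x y. idm x y - Mop u x y)
        = det_on (vert_idx V r) (\<lambda>x y. idm x y - Dop F x y + Wop F w x y)
          * (\<Prod>\<alpha>\<in>F. det_on (vert_idx \<alpha> r) (Umat u \<alpha>))"
proof -
  have sub: "\<And>\<alpha>. \<alpha> \<in> F \<Longrightarrow> \<alpha> \<subseteq> V" and fin: "\<And>\<alpha>. \<alpha> \<in> F \<Longrightarrow> finite \<alpha>"
    using assms(1,3) finite_subset by blast+
  let ?X = "edge_idx F r" and ?Y = "vert_idx V r"
  have fX: "finite ?X" and fY: "finite ?Y"
    using assms(1,2) fin by (simp_all add: finite_edge_idx finite_vert_idx)
  have "det_on ?X (\<lambda>x y. idm x y - Mop u x y) = det_on ?X (\<lambda>x y. \<Sum>z\<in>?X. U_diag u x z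
      * (idm z y - (\<Sum>g\<in>?Y. I_minus_W_lift w z g * idm g (tgt_idx y))))"
    using assms(1,2,5) sub by (intro det_on_cong idm_minus_Mop_factorization)
  also have "\<dots> = det_on ?X (U_diag u)
      * det_on ?X (\<lambda>z y. idm z y - (\<Sum>g\<in>?Y. I_minus_W_lift w z g * idm g (tgt_idx y)))"
    using fX by (rule det_on_mult)
  also have "det_on ?X (\<lambda>z y. idm z y - (\<Sum>g\<in>?Y. I_minus_W_lift w z g * idm g (tgt_idx y)))
      = det_on ?Y (\<lambda>g h. idm g h - (\<Sum>x\<in>?X. idm g (tgt_idx x) * I_minus_W_lift w x h))"
    using fX fY by (rule det_on_sylvester)
  also have "\<dots> = det_on ?Y (\<lambda>g h. idm g h - Dop F g h + Wop F w g h)"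
    using assms(2) fin by (intro det_on_cong) (auto simp: sum_tgt_mult_I_minus_W_lift vert_idx_def)
  also have "det_on ?X (U_diag u) = (\<Prod>\<alpha>\<in>F. det_on (vert_idx \<alpha> r) (Umat u \<alpha>))"
    using assms(2) fin by (rule det_on_U_diag)
  finally show ?thesis
    by (simp add: zeta_inv_def mult.commute)
qed

end
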